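(* There is an absolute constant $c$ such that the following holds. Let $G=(V,E)$ be a graph with $n$ vertices, $m$ edges and degeneracy $d$, let $\mathcal{C}=\{C_\ell\}_{\ell\in I}$ be an LA-succinct clique cover of $G$, and let $\mathcal{A}=\{A_v\}_{v\in V}$ and $\mathcal{D}=\{D_\ell\}_{\ell\in I}$ be its admissibility sets and admissibility duals. Then $$\|\mathcal{A}\|=\|\mathcal{D}\|\le c\cdot\min\{|\mathcal{C}|\,n,\ d\,m\}.$$
   Context: All graphs are finite, simple, undirected, with no isolated vertices; $n=|V|$, $m=|E|$; $N(v)$ open neighbourhood, $N[v]=N(v)\cup\{v\}$. Degeneracy $d:=\max_H\delta_H$ over subgraphs $H$ of $G$ ($\delta_H$ minimum degree). A clique is a vertex set inducing a complete subgraph. $\|\mathcal{F}\|:=\sum_{F\in\mathcal{F}}|F|$. A clique cover is an indexed family of cliques covering every edge. LA-succinct construction: maintain a family $\mathcal{C}$ of cliques of $G$, initially empty; an edge is uncovered if it is contained in no member. Update rule on an uncovered edge $\{u,v\}$: (1) if some $C_\ell\in\mathcal{C}$ has $C_\ell\cup\{u,v\}$ a clique of $G$, choose exactly one such $C_\ell$ and replace it by $C_\ell\cup\{u,v\}$; (2) otherwise add a new member $\{u,v\}$ with a new label. Step (1) is always applied when applicable. An LA-succinct clique cover is a clique cover of $G$ obtained from the empty family by repeatedly applying this rule to uncovered edges. For a clique cover $\{C_\ell\}_{\ell\in I}$: admissibility sets $A_v:=\{\ell\in I: C_\ell\subseteq N[v]\}$ for $v\in V$; admissibility duals $D_\ell:=\{v\in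 V: C_\ell\subseteq N[v]\}$ for $\ell\in I$. *)

theory Defs
  imports Complex_Main
begin

text \<open>Simple graphs on a finite vertex set V (vertices are naturals, so that the
  constant c is uniform over all graphs); edges are 2-element subsets of V.\<close>

definition graph :: "nat set \<Rightarrow> nat set set \<Rightarrow> bool" where
  "graph V E \<longleftrightarrow> finite V
     \<and> (\<forall>e\<in>E. \<exists>u v. u \<noteq> v \<and> u \<in> V \<and> v \<in> V \<and> e = {u, v})
     \<and> (\<forall>v\<in>V. \<exists>e\<in>E. v \<in> e)"

definition nbhd :: "nat set set \<Rightarrow> nat \<Rightarrow> nat set" where
  "nbhd E v = {u. {u, v} \<in> E}"

definition cnbhd :: "nat set set \<Rightarrow> nat \<Rightarrow> nat set" where
  "cnbhd E v = insert v (nbhd E v)"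

definition min_degree :: "nat set \<Rightarrow> nat set set \<Rightarrow> nat" where
  "min_degree W F = Min ((\<lambda>w. card {e\<in>F. w \<in> e}) ` W)"

definition degeneracy :: "nat set \<Rightarrow> nat set set \<Rightarrow> nat" where
  "degeneracy V E = Max {min_degree W F | W F. W \<noteq> {} \<and> W \<subseteq> V \<and> F \<subseteq> E
                                              \<and> (\<forall>e\<in>F. e \<subseteq> W)}"

definition is_clique :: "nat set \<Rightarrow> nat set set \<Rightarrow> nat set \<Rightarrow> bool" where
  "is_clique V E K \<longleftrightarrow> K \<subseteq> V \<and> (\<forall>x\<in>K. \<forall>y\<in>K. x \<noteq> y \<longrightarrow> {x, y} \<in> E)"

text \<open>Indexed families of cliques are lists; the labels are the positions.\<close>
definition uncovered :: "nat set set \<Rightarrow> nat set list \<Rightarrow> nat \<Rightarrow> nat \<Rightarrow> bool" where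
  "uncovered E Cs u v \<longleftrightarrow> u \<noteq> v \<and> {u, v} \<in> E \<and> (\<forall>K\<in>set Cs. \<not> {u, v} \<subseteq> K)"

definition la_step :: "nat set \<Rightarrow> nat set set \<Rightarrow> nat set list \<Rightarrow> nat set list \<Rightarrow> bool" where
  "la_step V E Cs Cs' \<longleftrightarrow> (\<exists>u v. uncovered E Cs u v \<and>
     ((\<exists>l < length Cs. is_clique V E (Cs ! l \<union> {u, v}) \<and> Cs' = Cs[l := Cs ! l \<union> {u, v}])
      \<or> ((\<forall>l < length Cs. \<not> is_clique V E (Cs ! l \<union> {u, v})) \<and> Cs' = Cs @ [{u, v}])))"

definition is_clique_cover :: "nat set \<Rightarrow> nat set set \<Rightarrow> nat set list \<Rightarrow> bool" where
  "is_clique_cover V E Cs \<longleftrightarrow> (\<forall>K\<in>set Cs. is_clique V E K) \<and> (\<forall>e\<in>E. \<exists>K\<in>set Cs. e \<subseteq> K)"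

definition la_succinct_cover :: "nat set \<Rightarrow> nat set set \<Rightarrow> nat set list \<Rightarrow> bool" where
  "la_succinct_cover V E Cs \<longleftrightarrow> (la_step V E)\<^sup>*\<^sup>* [] Cs \<and> is_clique_cover V E Cs"

definition adm_set :: "nat set set \<Rightarrow> nat set list \<Rightarrow> nat \<Rightarrow> nat set" where
  "adm_set E Cs v = {l. l < length Cs \<and> Cs ! l \<subseteq> cnbhd E v}"

definition adm_dual :: "nat set \<Rightarrow> nat set set \<Rightarrow> nat set list \<Rightarrow> nat \<Rightarrow> nat set" where
  "adm_dual V E Cs l = {v\<in>V. Cs ! l \<subseteq> cnbhd E v}"

end

theory Submission
  imports Defs
begin

text \<open>Every clique \<open>C\<^sub>l\<close> built by the LA-succinct rule was opened by an edge \<open>e\<^sub>l\<close> that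
  was uncovered at that moment, so the \<open>e\<^sub>l\<close> are distinct edges with \<open>e\<^sub>l \<subseteq> C\<^sub>l\<close>; in particular
  \<open>|\<C>| \<le> m\<close>. A vertex outside \<open>e\<^sub>l\<close> that is admissible for \<open>C\<^sub>l\<close> is adjacent to both ends
  of \<open>e\<^sub>l\<close>, so \<open>\<parallel>\<D>\<parallel> \<le> 2|\<C>| + \<Sum>\<^sub>e |Z(e)|\<close>, where \<open>Z(e)\<close> is the common neighbourhood of the
  ends of \<open>e\<close>. The pairs \<open>(e, z)\<close> with \<open>z \<in> Z(e)\<close> are triangle incidences; deleting a vertex
  of degree \<open>k \<le> d\<close> destroys \<open>k\<close> edges and at most \<open>2k\<^sup>2 \<le> 2dk\<close> such pairs, so peeling the
  graph along low-degree vertices gives \<open>\<Sum>\<^sub>e |Z(e)| \<le> 2dm\<close> and hence \<open>\<parallel>\<D>\<parallel> \<le> 4dm\<close>.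
  The bound \<open>|\<C>| n\<close> is trivial and \<open>\<parallel>\<A>\<parallel> = \<parallel>\<D>\<parallel>\<close> is double counting, so \<open>c = 4\<close> works.\<close>

lemma graph_finite_vertices: "graph V E \<Longrightarrow> finite V"
  unfolding graph_def by blast

lemma graph_edgeE:
  assumes "graph V E" "e \<in> E"
  obtains u v where "u \<noteq> v" "u \<in> V" "v \<in> V" "e = {u, v}"
proof -
  have "\<forall>e\<in>E. \<exists>u v. u \<noteq> v \<and> u \<in> V \<and> v \<in> V \<and> e = {u, v}"
    using assms(1) unfolding graph_def by (elim conjE)
  then show thesis
    using that assms(2) by meson
qed

lemma graph_edges_subset: "graph V E \<Longrightarrow> e \<in> E \<Longrightarrow> e \<subseteq> V"
  by (elim graph_edgeE) auto

lemma graph_finite_edges: "graph V E \<Longrightarrow> finite E"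
  by (meson graph_edges_subset graph_finite_vertices finite_Pow_iff finite_subset PowI subsetI)

lemma graph_no_loop:
  assumes "graph V E"
  shows "{a} \<notin> E"
proof
  assume "{a} \<in> E"
  then obtain u v where "u \<noteq> v" "u \<in> V" "v \<in> V" "{a} = {u, v}"
    by (rule graph_edgeE[OF assms])
  then show False by simp
qed

lemma min_degree_le_degeneracy:
  assumes g: "graph V E" and "W \<noteq> {}" "W \<subseteq> V" "F \<subseteq> E" "\<forall>e\<in>F. e \<subseteq> W"
  shows "min_degree W F \<le> degeneracy V E"
proof -
  have "{min_degree W F | W F. W \<noteq> {} \<and> W \<subseteq> V \<and> F \<subseteq> E \<and> (\<forall>e\<in>F. e \<subseteq> W)}
        \<subseteq> (\<lambda>(W, F). min_degree W F) ` (Pow V \<times> Pow E)"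
    by auto
  then have "finite {min_degree W F | W F. W \<noteq> {} \<and> W \<subseteq> V \<and> F \<subseteq> E \<and> (\<forall>e\<in>F. e \<subseteq> W)}"
    by (rule finite_subset) (simp add: graph_finite_vertices[OF g] graph_finite_edges[OF g])
  then show ?thesis
    unfolding degeneracy_def using assms by (intro Max_ge) blast+
qed

lemma one_le_degeneracy:
  assumes g: "graph V E" and "e \<in> E"
  shows "1 \<le> degeneracy V E"
proof -
  obtain u v where uv: "u \<noteq> v" "u \<in> V" "v \<in> V" "e = {u, v}"
    using graph_edgeE[OF assms] by blast
  have "(\<lambda>w. card {e'\<in>{e}. w \<in> e'}) ` e = (\<lambda>w. 1) ` e"
  proof (rule image_cong)
    show "card {e'\<in>{e}. w \<in> e'} = 1" if "w \<in> e" for w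
    proof -
      have "{e'\<in>{e}. w \<in> e'} = {e}"
        using that by blast
      then show ?thesis by simp
    qed
  qed simp
  also have "\<dots> = {1}"
    using uv by simp
  finally have "min_degree e {e} = 1"
    unfolding min_degree_def by simp
  moreover have "min_degree e {e} \<le> degeneracy V E"
    using uv \<open>e \<in> E\<close> by (intro min_degree_le_degeneracy[OF g]) auto
  ultimately show ?thesis by simp
qed

definition edges_within :: "nat set set \<Rightarrow> nat set \<Rightarrow> nat set set" where
  "edges_within E W = {e\<in>E. e \<subseteq> W}"

definition common_nbhd :: "nat set set \<Rightarrow> nat set \<Rightarrow> nat set \<Rightarrow> nat set" where
  "common_nbhd E W e = {z\<in>W. \<forall>a\<in>e. {a, z} \<in> E}"

definition triangle_incidences :: "nat set set \<Rightarrow> nat set \<Rightarrow> (nat set \<times> nat) set" where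
  "triangle_incidences E W = Sigma (edges_within E W) (common_nbhd E W)"

lemma finite_edges_within: "graph V E \<Longrightarrow> finite (edges_within E W)"
  unfolding edges_within_def using graph_finite_edges by simp

lemma finite_triangle_incidences:
  assumes "graph V E" "finite W"
  shows "finite (triangle_incidences E W)"
proof (rule finite_subset)
  show "triangle_incidences E W \<subseteq> E \<times> W"
    unfolding triangle_incidences_def edges_within_def common_nbhd_def by auto
  show "finite (E \<times> W)"
    using assms graph_finite_edges by blast
qed

lemma edges_within_at_vertex:
  assumes g: "graph V E" and "w \<in> W"
  shows "{e\<in>edges_within E W. w \<in> e} = (\<lambda>a. {a, w}) ` (nbhd E w \<inter> W)"
proof (intro equalityI subsetI)
  fix e assume "e \<in> {e\<in>edges_within E W. w \<in> e}"
  then have e: "e \<in> E" "e \<subseteq> W" "w \<in> e"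
    by (auto simp: edges_within_def)
  obtain u v where "u \<noteq> v" "u \<in> V" "v \<in> V" "e = {u, v}"
    by (rule graph_edgeE[OF g e(1)])
  then obtain a where "e = {a, w}"
    using e(3) by (metis empty_iff insert_commute insert_iff)
  then show "e \<in> (\<lambda>a. {a, w}) ` (nbhd E w \<inter> W)"
    using e by (auto simp: nbhd_def)
next
  fix e assume "e \<in> (\<lambda>a. {a, w}) ` (nbhd E w \<inter> W)"
  then show "e \<in> {e\<in>edges_within E W. w \<in> e}"
    using \<open>w \<in> W\<close> by (auto simp: nbhd_def edges_within_def)
qed

lemma card_edges_within_at_vertex:
  assumes g: "graph V E" and "w \<in> W"
  shows "card {e\<in>edges_within E W. w \<in> e} = card (nbhd E w \<inter> W)"
proof -
  have "w \<notin> nbhd E w"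
    using graph_no_loop[OF g] by (simp add: nbhd_def)
  then have "inj_on (\<lambda>a. {a, w}) (nbhd E w \<inter> W)"
    by (auto simp: inj_on_def doubleton_eq_iff)
  then show ?thesis
    by (simp add: edges_within_at_vertex[OF assms] card_image)
qed

lemma card_edges_within_remove_vertex:
  assumes g: "graph V E" and "w \<in> W"
  shows "card (edges_within E W) = card (edges_within E (W - {w})) + card (nbhd E w \<inter> W)"
proof -
  have "card (edges_within E W) = card (edges_within E (W - {w}) \<union> {e\<in>edges_within E W. w \<in> e})"
    by (rule arg_cong[where f = card]) (auto simp: edges_within_def)
  also have "\<dots> = card (edges_within E (W - {w})) + card {e\<in>edges_within E W. w \<in> e}"
  proof (rule card_Un_disjoint)
    show "finite (edges_within E (W - {w}))" "finite {e\<in>edges_within E W. w \<in> e}"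
      using finite_edges_within[OF g] by simp_all
  qed (auto simp: edges_within_def)
  also have "card {e\<in>edges_within E W. w \<in> e} = card (nbhd E w \<inter> W)"
    by (rule card_edges_within_at_vertex[OF assms])
  finally show ?thesis .
qed

lemma triangle_incidences_remove_vertex:
  assumes g: "graph V E" and w: "w \<in> W"
  defines "N \<equiv> nbhd E w \<inter> W"
  shows "triangle_incidences E W \<subseteq> triangle_incidences E (W - {w})
           \<union> (\<lambda>(a, z). ({a, w}, z)) ` (N \<times> N) \<union> (\<lambda>(a, b). ({a, b}, w)) ` (N \<times> N)"
proof (intro subsetI)
  fix p assume "p \<in> triangle_incidences E W"
  then obtain e z where p: "p = (e, z)" and e: "e \<in> E" "e \<subseteq> W" and z: "z \<in> W" "\<forall>a\<in>e. {a, z} \<in> E"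
    unfolding triangle_incidences_def edges_within_def common_nbhd_def by auto
  consider "w \<in> e" | "z = w" | "w \<notin> e" "z \<noteq> w" by blast
  then show "p \<in> triangle_incidences E (W - {w})
           \<union> (\<lambda>(a, z). ({a, w}, z)) ` (N \<times> N) \<union> (\<lambda>(a, b). ({a, b}, w)) ` (N \<times> N)"
  proof cases
    case 1
    then have "e \<in> {e\<in>edges_within E W. w \<in> e}"
      using e by (simp add: edges_within_def)
    then obtain a where "a \<in> N" "e = {a, w}"
      unfolding edges_within_at_vertex[OF g w] N_def by blast
    moreover have "z \<in> N"
      using z 1 by (auto simp: N_def nbhd_def insert_commute)
    ultimately have "p \<in> (\<lambda>(a, z). ({a, w}, z)) ` (N \<times> N)"
      using p by (intro image_eqI[of _ _ "(a, z)"]) auto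
    then show ?thesis by blast
  next
    case 2
    obtain u v where "e = {u, v}"
      using graph_edgeE[OF g e(1)] by metis
    moreover have "u \<in> N" "v \<in> N"
      using z e 2 \<open>e = {u, v}\<close> by (auto simp: N_def nbhd_def)
    ultimately have "p \<in> (\<lambda>(a, b). ({a, b}, w)) ` (N \<times> N)"
      using p 2 by (intro image_eqI[of _ _ "(u, v)"]) auto
    then show ?thesis by blast
  next
    case 3
    then show ?thesis
      using p e z unfolding triangle_incidences_def edges_within_def common_nbhd_def by auto
  qed
qed

lemma card_triangle_incidences_remove_vertex:
  assumes g: "graph V E" and w: "w \<in> W" and "finite W"
  shows "card (triangle_incidences E W)
           \<le> card (triangle_incidences E (W - {w})) + 2 * card (nbhd E w \<inter> W) ^ 2"
proof -
  let ?N = "nbhd E w \<inter> W"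
  have fN: "finite (?N \<times> ?N)"
    using \<open>finite W\<close> by simp
  have "card (triangle_incidences E W)
          \<le> card (triangle_incidences E (W - {w})
                  \<union> (\<lambda>(a, z). ({a, w}, z)) ` (?N \<times> ?N) \<union> (\<lambda>(a, b). ({a, b}, w)) ` (?N \<times> ?N))"
    using triangle_incidences_remove_vertex[OF g w] finite_triangle_incidences[OF g] fN \<open>finite W\<close>
    by (intro card_mono) auto
  also have "\<dots> \<le> card (triangle_incidences E (W - {w}))
                  + card ((\<lambda>(a, z). ({a, w}, z)) ` (?N \<times> ?N)) + card ((\<lambda>(a, b). ({a, b}, w)) ` (?N \<times> ?N))"
    by (meson card_Un_le add_mono le_trans order_refl)
  also have "\<dots> \<le> card (triangle_incidences E (W - {w})) + card (?N \<times> ?N) + card (?N \<times> ?N)"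
    by (intro add_mono card_image_le fN order_refl)
  also have "\<dots> = card (triangle_incidences E (W - {w})) + 2 * card ?N ^ 2"
    by (simp add: card_cartesian_product power2_eq_square)
  finally show ?thesis .
qed

lemma exists_low_degree_vertex:
  assumes g: "graph V E" and "W \<noteq> {}" "W \<subseteq> V"
  shows "\<exists>w\<in>W. card (nbhd E w \<inter> W) \<le> degeneracy V E"
proof -
  have "finite W"
    using assms graph_finite_vertices finite_subset by blast
  then have "min_degree W (edges_within E W) \<in> (\<lambda>w. card {e\<in>edges_within E W. w \<in> e}) ` W"
    unfolding min_degree_def using \<open>W \<noteq> {}\<close> by (intro Min_in) auto
  then obtain w where w: "w \<in> W" and "min_degree W (edges_within E W) = card (nbhd E w \<inter> W)"
    using card_edges_within_at_vertex[OF g] by force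
  moreover have "min_degree W (edges_within E W) \<le> degeneracy V E"
    using assms by (intro min_degree_le_degeneracy) (auto simp: edges_within_def)
  ultimately show ?thesis
    by auto
qed

lemma card_triangle_incidences_le:
  assumes g: "graph V E" and "W \<subseteq> V"
    and low: "\<And>W'. W' \<subseteq> W \<Longrightarrow> W' \<noteq> {} \<Longrightarrow> \<exists>w\<in>W'. card (nbhd E w \<inter> W') \<le> k"
  shows "card (triangle_incidences E W) \<le> 2 * k * card (edges_within E W)"
proof -
  have "finite W"
    using assms graph_finite_vertices finite_subset by blast
  then show ?thesis
    using low
  proof (induction W rule: finite_psubset_induct)
    case (psubset W)
    show ?case
    proof (cases "W = {}")
      case True
      then show ?thesis
        by (simp add: triangle_incidences_def common_nbhd_def Sigma_def)
    next
      case False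
      then obtain w where w: "w \<in> W" and deg: "card (nbhd E w \<inter> W) \<le> k"
        using psubset.prems[OF order_refl] by blast
      have IH: "card (triangle_incidences E (W - {w})) \<le> 2 * k * card (edges_within E (W - {w}))"
      proof (rule psubset.IH)
        show "W - {w} \<subset> W"
          using w by blast
        show "\<exists>w\<in>W'. card (nbhd E w \<inter> W') \<le> k" if "W' \<subseteq> W - {w}" "W' \<noteq> {}" for W'
          using that by (intro psubset.prems) auto
      qed
      have "card (triangle_incidences E W)
              \<le> card (triangle_incidences E (W - {w})) + 2 * card (nbhd E w \<inter> W) ^ 2"
        by (rule card_triangle_incidences_remove_vertex[OF g w psubset.hyps(1)])
      also have "\<dots> \<le> 2 * k * card (edges_within E (W - {w})) + 2 * (k * card (nbhd E w \<inter> W))"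
        using IH mult_le_mono1[OF deg, of "card (nbhd E w \<inter> W)"] unfolding power2_eq_square by linarith
      also have "\<dots> = 2 * k * card (edges_within E W)"
        unfolding card_edges_within_remove_vertex[OF g w] by (simp add: distrib_left)
      finally show ?thesis .
    qed
  qed
qed

lemma sum_card_common_nbhd_le:
  assumes g: "graph V E"
  shows "(\<Sum>e\<in>E. card (common_nbhd E V e)) \<le> 2 * degeneracy V E * card E"
proof -
  have E: "edges_within E V = E"
    using graph_edges_subset[OF g] by (auto simp: edges_within_def)
  have "(\<Sum>e\<in>E. card (common_nbhd E V e)) = card (triangle_incidences E V)"
    unfolding triangle_incidences_def E using graph_finite_edges[OF g] graph_finite_vertices[OF g]
    by (simp add: common_nbhd_def)
  also have "\<dots> \<le> 2 * degeneracy V E * card (edges_within E V)"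
    using exists_low_degree_vertex[OF g] by (intro card_triangle_incidences_le[OF g]) auto
  finally show ?thesis
    unfolding E .
qed

definition witness_edges :: "nat set set \<Rightarrow> nat set list \<Rightarrow> nat set list \<Rightarrow> bool" where
  "witness_edges E Cs es \<longleftrightarrow>
     length es = length Cs \<and> distinct es \<and> set es \<subseteq> E \<and> (\<forall>l<length Cs. es ! l \<subseteq> Cs ! l)"

lemma la_step_witness_edges:
  assumes "la_step V E Cs Cs'" "witness_edges E Cs es"
  shows "\<exists>es'. witness_edges E Cs' es'"
proof -
  obtain u v where unc: "uncovered E Cs u v" and
    "(\<exists>l < length Cs. Cs' = Cs[l := Cs ! l \<union> {u, v}]) \<or> Cs' = Cs @ [{u, v}]"
    using assms(1) unfolding la_step_def by blast
  then consider l where "l < length Cs" "Cs' = Cs[l := Cs ! l \<union> {u, v}]" | "Cs' = Cs @ [{u, v}]"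
    by blast
  then show ?thesis
  proof cases
    case 1
    then have "witness_edges E Cs' es"
      using assms(2) unfolding witness_edges_def by (auto simp: nth_list_update)
    then show ?thesis ..
  next
    case 2
    have "{u, v} \<notin> set es"
    proof
      assume "{u, v} \<in> set es"
      then obtain l where "l < length Cs" "{u, v} \<subseteq> Cs ! l"
        using assms(2) unfolding witness_edges_def by (metis in_set_conv_nth)
      then show False
        using unc unfolding uncovered_def by (metis nth_mem)
    qed
    then have "witness_edges E Cs' (es @ [{u, v}])"
      using assms(2) unc 2 unfolding witness_edges_def uncovered_def by (auto simp: nth_append)
    then show ?thesis ..
  qed
qed

lemma la_reachable_witness_edges:
  assumes "(la_step V E)\<^sup>*\<^sup>* [] Cs"
  shows "\<exists>es. witness_edges E Cs es"
  using assms
proof (induction rule: rtranclp_induct)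
  case base
  have "witness_edges E [] []"
    by (simp add: witness_edges_def)
  then show ?case ..
next
  case (step Cs Cs')
  then show ?case
    using la_step_witness_edges by blast
qed

lemma sum_card_adm_set_eq_sum_card_adm_dual:
  assumes "finite V"
  shows "(\<Sum>v\<in>V. card (adm_set E Cs v)) = (\<Sum>l<length Cs. card (adm_dual V E Cs l))"
proof -
  let ?adm = "\<lambda>v l. if Cs ! l \<subseteq> cnbhd E v then 1 else 0 :: nat"
  have "(\<Sum>v\<in>V. card (adm_set E Cs v)) = (\<Sum>v\<in>V. \<Sum>l<length Cs. ?adm v l)"
    unfolding adm_set_def by (simp add: sum.inter_filter[symmetric] lessThan_def conj_commute)
  also have "\<dots> = (\<Sum>l<length Cs. \<Sum>v\<in>V. ?adm v l)"
    by (rule sum.swap)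
  also have "\<dots> = (\<Sum>l<length Cs. card (adm_dual V E Cs l))"
    unfolding adm_dual_def using assms by (simp add: sum.inter_filter[symmetric])
  finally show ?thesis .
qed

lemma sum_card_adm_dual_le:
  assumes "finite V"
  shows "(\<Sum>l<length Cs. card (adm_dual V E Cs l)) \<le> length Cs * card V"
proof -
  have "(\<Sum>l<length Cs. card (adm_dual V E Cs l)) \<le> (\<Sum>l<length Cs. card V)"
    using assms by (intro sum_mono card_mono) (auto simp: adm_dual_def)
  then show ?thesis by simp
qed

lemma adm_dual_subset:
  assumes "e \<subseteq> Cs ! l"
  shows "adm_dual V E Cs l \<subseteq> e \<union> common_nbhd E V e"
proof
  fix v assume "v \<in> adm_dual V E Cs l"
  then have "v \<in> V" "e \<subseteq> cnbhd E v"
    using assms by (auto simp: adm_dual_def)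
  then show "v \<in> e \<union> common_nbhd E V e"
    by (auto simp: common_nbhd_def cnbhd_def nbhd_def)
qed

lemma card_adm_dual_le:
  assumes g: "graph V E" and "e \<in> E" "e \<subseteq> Cs ! l"
  shows "card (adm_dual V E Cs l) \<le> 2 + card (common_nbhd E V e)"
proof -
  obtain u v where "e = {u, v}"
    using graph_edgeE[OF g \<open>e \<in> E\<close>] by metis
  have "card (adm_dual V E Cs l) \<le> card (e \<union> common_nbhd E V e)"
    using adm_dual_subset[OF \<open>e \<subseteq> Cs ! l\<close>] graph_finite_vertices[OF g] \<open>e = {u, v}\<close>
    by (intro card_mono) (auto simp: common_nbhd_def)
  also have "\<dots> \<le> card e + card (common_nbhd E V e)"
    by (rule card_Un_le)
  also have "card e \<le> 2"
    using \<open>e = {u, v}\<close> by (simp add: card_insert_le_m1)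
  finally show ?thesis by simp
qed

lemma sum_nth_distinct:
  assumes "distinct xs"
  shows "(\<Sum>i<length xs. f (xs ! i)) = (\<Sum>x\<in>set xs. f x)"
  using assms by (simp add: sum.distinct_set_conv_list sum_list_sum_nth atLeast0LessThan)

lemma la_reachable_sum_card_adm_dual_le:
  assumes g: "graph V E" and reach: "(la_step V E)\<^sup>*\<^sup>* [] Cs"
  shows "(\<Sum>l<length Cs. card (adm_dual V E Cs l)) \<le> 4 * degeneracy V E * card E"
proof -
  obtain es where es: "length es = length Cs" "distinct es" "set es \<subseteq> E" "\<forall>l<length Cs. es ! l \<subseteq> Cs ! l"
    using la_reachable_witness_edges[OF reach] unfolding witness_edges_def by blast
  have n_le_m: "length Cs \<le> card E"
    using es graph_finite_edges[OF g] by (metis card_mono distinct_card)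
  have "(\<Sum>l<length Cs. card (adm_dual V E Cs l)) \<le> (\<Sum>l<length Cs. 2 + card (common_nbhd E V (es ! l)))"
    using es by (intro sum_mono card_adm_dual_le[OF g]) auto
  also have "\<dots> = 2 * length Cs + (\<Sum>l<length es. card (common_nbhd E V (es ! l)))"
    unfolding sum.distrib es(1) by simp
  also have "\<dots> = 2 * length Cs + (\<Sum>e\<in>set es. card (common_nbhd E V e))"
    using sum_nth_distinct[OF es(2), of "\<lambda>e. card (common_nbhd E V e)"] by simp
  also have "\<dots> \<le> 2 * length Cs + (\<Sum>e\<in>E. card (common_nbhd E V e))"
    using es(3) graph_finite_edges[OF g] by (intro add_left_mono sum_mono2) auto
  also have "\<dots> \<le> 2 * length Cs + 2 * degeneracy V E * card E"
    using sum_card_common_nbhd_le[OF g] by simp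
  also have "\<dots> \<le> 4 * degeneracy V E * card E"
  proof (cases "E = {}")
    case False
    then have "1 \<le> degeneracy V E"
      using one_le_degeneracy[OF g] by blast
    then show ?thesis
      using n_le_m mult_le_mono1[of 1 "degeneracy V E" "card E"] by linarith
  qed (use n_le_m in simp)
  finally show ?thesis .
qed

theorem mainTheorem15:
  shows "\<exists>c::real. \<forall>V E Cs. graph V E \<and> la_succinct_cover V E Cs \<longrightarrow>
     (\<Sum>v\<in>V. card (adm_set E Cs v)) = (\<Sum>l<length Cs. card (adm_dual V E Cs l))
     \<and> real (\<Sum>l<length Cs. card (adm_dual V E Cs l))
         \<le> c * real (min (length Cs * card V) (degeneracy V E * card E))"
proof (intro exI[of _ 4] allI impI conjI)
  fix V E Cs
  assume "graph V E \<and> la_succinct_cover V E Cs"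
  then have g: "graph V E" and reach: "(la_step V E)\<^sup>*\<^sup>* [] Cs"
    unfolding la_succinct_cover_def by auto
  show "(\<Sum>v\<in>V. card (adm_set E Cs v)) = (\<Sum>l<length Cs. card (adm_dual V E Cs l))"
    by (rule sum_card_adm_set_eq_sum_card_adm_dual[OF graph_finite_vertices[OF g]])
  have "(\<Sum>l<length Cs. card (adm_dual V E Cs l))
          \<le> 4 * min (length Cs * card V) (degeneracy V E * card E)"
    using sum_card_adm_dual_le[OF graph_finite_vertices[OF g], of E Cs]
      la_reachable_sum_card_adm_dual_le[OF g reach] by (simp add: nat_mult_min_right mult.assoc)
  then show "real (\<Sum>l<length Cs. card (adm_dual V E Cs l))
               \<le> 4 * real (min (length Cs * card V) (degeneracy V E * card E))"
    by (metis of_nat_le_iff of_nat_mult of_nat_numeral)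
qed

end
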